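(* Let $g(t)$, $t\in[0,T)$, be the maximal Ricci flow solution on $S^1\times S^3$ of the form $g(t)=\phi^2dz^2+a^2\omega^1\otimes\omega^1+b^2\omega^2\otimes\omega^2+c^2\omega^3\otimes\omega^3$ starting from initial data with $0<a\le b\le c$, and let $\hat c(t)=\max_s c(s,t)$. Then $\hat c(t)^2\le -4t+\hat c(0)^2$.
   Context: $S^3=SU(2)$ carries a global left-invariant frame $E_1,E_2,E_3$ with $[E_i,E_j]=-2\epsilon_{ijk}E_k$ and dual coframe $\omega^i$; $z\in S^1=[0,2\pi)$, $\phi,a,b,c$ positive smooth $2\pi$-periodic functions; $s$ is the arclength coordinate $ds=\phi\,dz$. The Ricci flow $\partial_tg=-2\mathrm{Ric}(g)$ preserves this form. *)

theory Defs
  imports "HOL-Analysis.Analysis"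
begin

text \<open>Functions of (z,t) with z the S^1 coordinate (lifted to the real line, 2pi-periodic)
  and t the time.  This says that all
  iterated partial derivatives exist and are continuous, i.e. the function is C-infinity.\<close>

definition smooth_zt :: "real \<Rightarrow> (real \<Rightarrow> real \<Rightarrow> real) \<Rightarrow> bool" where
  "smooth_zt T f \<longleftrightarrow> (\<exists>F :: (real \<Rightarrow> real \<Rightarrow> real) set. f \<in> F \<and>
     (\<forall>g\<in>F. continuous_on (UNIV \<times> {0..<T}) (\<lambda>(z,t). g z t) \<and>
        (\<exists>gz\<in>F. \<forall>z. \<forall>t\<in>{0..<T}. ((\<lambda>y. g y t) has_real_derivative gz z t) (at z)) \<and>
        (\<exists>gt\<in>F. \<forall>z. \<forall>t\<in>{0..<T}.
            ((\<lambda>s. g z s) has_real_derivative gt z t) (at t within {0..<T}))))"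

definition dz :: "(real \<Rightarrow> real \<Rightarrow> real) \<Rightarrow> real \<Rightarrow> real \<Rightarrow> real" where
  "dz f z t = deriv (\<lambda>y. f y t) z"

definition dt :: "(real \<Rightarrow> real \<Rightarrow> real) \<Rightarrow> real \<Rightarrow> real \<Rightarrow> real" where
  "dt f z t = deriv (\<lambda>s. f z s) t"

definition ds :: "(real \<Rightarrow> real \<Rightarrow> real) \<Rightarrow> (real \<Rightarrow> real \<Rightarrow> real) \<Rightarrow> real \<Rightarrow> real \<Rightarrow> real" where
  "ds \<phi> f z t = dz f z t / \<phi> z t"

text \<open>Ricci flow of g = phi^2 dz^2 + a^2 w1^2 + b^2 w2^2 + c^2 w3^2 on S^1 x S^3,
  with [E_i,E_j] = -2 eps_ijk E_k, written componentwise (dg/dt = -2 Ric(g)):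
   phi_t = phi (a_ss/a + b_ss/b + c_ss/c),
   a_t = a_ss + a_s (b_s/b + c_s/c) - 2 (a^4 - (b^2-c^2)^2)/(a b^2 c^2), and cyclically.\<close>
definition bianchi_rf :: "real \<Rightarrow> (real \<Rightarrow> real \<Rightarrow> real) \<Rightarrow> (real \<Rightarrow> real \<Rightarrow> real) \<Rightarrow>
    (real \<Rightarrow> real \<Rightarrow> real) \<Rightarrow> (real \<Rightarrow> real \<Rightarrow> real) \<Rightarrow> bool" where
  "bianchi_rf T \<phi> a b c \<longleftrightarrow> 0 < T \<and>
     smooth_zt T \<phi> \<and> smooth_zt T a \<and> smooth_zt T b \<and> smooth_zt T c \<and>
     (\<forall>z. \<forall>t\<in>{0..<T}. 0 < \<phi> z t \<and> 0 < a z t \<and> 0 < b z t \<and> 0 < c z t) \<and>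
     (\<forall>z. \<forall>t\<in>{0..<T}. \<phi> (z + 2*pi) t = \<phi> z t \<and> a (z + 2*pi) t = a z t \<and>
                        b (z + 2*pi) t = b z t \<and> c (z + 2*pi) t = c z t) \<and>
     (\<forall>z. \<forall>t\<in>{0<..<T}.
        dt \<phi> z t = \<phi> z t * (ds \<phi> (ds \<phi> a) z t / a z t + ds \<phi> (ds \<phi> b) z t / b z t
                               + ds \<phi> (ds \<phi> c) z t / c z t) \<and>
        dt a z t = ds \<phi> (ds \<phi> a) z t
                   + ds \<phi> a z t * (ds \<phi> b z t / b z t + ds \<phi> c z t / c z t)
                   - 2 * ((a z t)^4 - ((b z t)^2 - (c z t)^2)^2) / (a z t * (b z t)^2 * (c z t)^2) \<and>
        dt b z t = ds \<phi> (ds \<phi> b) z t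
                   + ds \<phi> b z t * (ds \<phi> a z t / a z t + ds \<phi> c z t / c z t)
                   - 2 * ((b z t)^4 - ((a z t)^2 - (c z t)^2)^2) / (b z t * (a z t)^2 * (c z t)^2) \<and>
        dt c z t = ds \<phi> (ds \<phi> c) z t
                   + ds \<phi> c z t * (ds \<phi> a z t / a z t + ds \<phi> b z t / b z t)
                   - 2 * ((c z t)^4 - ((a z t)^2 - (b z t)^2)^2) / (c z t * (a z t)^2 * (b z t)^2))"

definition chat :: "(real \<Rightarrow> real \<Rightarrow> real) \<Rightarrow> real \<Rightarrow> real" where
  "chat c t = Sup ((\<lambda>z. c z t) ` {0..2*pi})"

end

theory Submission
  imports Defs
begin

text \<open>Both bounds come from the maximum principle on the circle, applied at the first time at
  which a bound perturbed by \<open>\<epsilon>(1 + t)\<close> fails. At a spatial maximum of \<open>c\<close> we have \<open>c\<^sub>s = 0\<close> and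
  \<open>c\<^sub>s\<^sub>s \<le> 0\<close>, so the evolution equation gives \<open>c c\<^sub>t \<le> -2 (c\<^sup>4 - (a\<^sup>2 - b\<^sup>2)\<^sup>2) / (a\<^sup>2 b\<^sup>2) \<le> -2\<close>
  as long as \<open>a, b \<le> c\<close>; hence \<open>c\<^sup>2\<close> decreases at rate at least 4 at its maximum.
  That \<open>a, b \<le> c\<close> persists is shown the same way for the larger ratio \<open>p/c\<close>, \<open>p \<in> {a, b}\<close>:
  at a spatial maximum of \<open>p/c\<close> the first-order terms of the equations for \<open>p\<close> and \<open>c\<close> cancel,
  and once \<open>p \<ge> c\<close> and \<open>p \<ge> q\<close> (\<open>q\<close> the third function) the reaction terms make \<open>p/c\<close>
  decrease, by \<open>(p\<^sup>4 - (q\<^sup>2 - c\<^sup>2)\<^sup>2) - (c\<^sup>4 - (q\<^sup>2 - p\<^sup>2)\<^sup>2) = 2 (p\<^sup>2 - c\<^sup>2)(p\<^sup>2 + c\<^sup>2 - q\<^sup>2)\<close>.\<close>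

section \<open>Slices and arclength derivatives\<close>

lemma smooth_zt_continuous:
  assumes "smooth_zt T f"
  shows "continuous_on (UNIV \<times> {0..<T}) (\<lambda>x. f (fst x) (snd x))"
  using assms unfolding smooth_zt_def by (auto simp: case_prod_beta')

lemma continuous_on_slice:
  fixes h :: "real \<Rightarrow> real \<Rightarrow> real"
  assumes "continuous_on (UNIV \<times> I) (\<lambda>x. h (fst x) (snd x))" and "t \<in> I"
  shows "continuous_on S (\<lambda>z. h z t)"
proof -
  have "continuous_on S (\<lambda>z. (\<lambda>x. h (fst x) (snd x)) (z, t))"
    by (rule continuous_on_compose2[OF assms(1)]) (use assms(2) in \<open>auto intro!: continuous_intros\<close>)
  then show ?thesis by simp
qed

lemma smooth_zt_has_derivative_z:
  assumes "smooth_zt T f" and "t \<in> {0..<T}"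
  shows "((\<lambda>y. f y t) has_real_derivative dz f z t) (at z)"
    and "((\<lambda>y. dz f y t) has_real_derivative dz (dz f) z t) (at z)"
proof -
  obtain F where "f \<in> F" and F: "\<And>g. g \<in> F \<Longrightarrow>
      \<exists>gz\<in>F. \<forall>z. \<forall>t\<in>{0..<T}. ((\<lambda>y. g y t) has_real_derivative gz z t) (at z)"
    using assms(1) unfolding smooth_zt_def by blast
  then obtain f1 where "f1 \<in> F" and f1: "\<And>z. ((\<lambda>y. f y t) has_real_derivative f1 z t) (at z)"
    using assms(2) by blast
  then obtain f2 where f2: "\<And>z. ((\<lambda>y. f1 y t) has_real_derivative f2 z t) (at z)"
    using F assms(2) by blast
  have dz_f: "(\<lambda>y. dz f y t) = (\<lambda>y. f1 y t)"
    using f1 by (auto simp: dz_def fun_eq_iff intro: DERIV_imp_deriv)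
  then show "((\<lambda>y. f y t) has_real_derivative dz f z t) (at z)"
    using f1 by (metis fun_cong)
  show "((\<lambda>y. dz f y t) has_real_derivative dz (dz f) z t) (at z)"
    using f2[of z] DERIV_imp_deriv[OF f2[of z]] unfolding dz_def[of "dz f"] dz_f by simp
qed

lemma smooth_zt_has_derivative_t:
  assumes "smooth_zt T f" and t: "t \<in> {0<..<T}"
  shows "((\<lambda>s. f z s) has_real_derivative dt f z t) (at t)"
proof -
  obtain F where "f \<in> F" and F: "\<And>g. g \<in> F \<Longrightarrow> \<exists>gt\<in>F. \<forall>z. \<forall>t\<in>{0..<T}.
      ((\<lambda>s. g z s) has_real_derivative gt z t) (at t within {0..<T})"
    using assms(1) unfolding smooth_zt_def by blast
  then obtain ft where "\<forall>z. \<forall>t\<in>{0..<T}. ((\<lambda>s. f z s) has_real_derivative ft z t) (at t within {0..<T})"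
    by blast
  then have "((\<lambda>s. f z s) has_real_derivative ft z t) (at t within {0..<T})"
    using t by simp
  then have "((\<lambda>s. f z s) has_real_derivative ft z t) (at t within {0<..<T})"
    by (rule has_field_derivative_subset) auto
  moreover have "at t within {0<..<T} = at t"
    using t by (intro at_within_open) auto
  ultimately show ?thesis
    by (simp add: dt_def DERIV_imp_deriv)
qed

lemma ds_ds_eq:
  assumes "((\<lambda>y. dz f y t) has_real_derivative dz (dz f) z t) (at z)"
    and "((\<lambda>y. \<phi> y t) has_real_derivative dz \<phi> z t) (at z)" and "\<phi> z t \<noteq> 0"
  shows "ds \<phi> (ds \<phi> f) z t = (dz (dz f) z t * \<phi> z t - dz f z t * dz \<phi> z t) / \<phi> z t ^ 3"
proof -
  have "((\<lambda>y. ds \<phi> f y t) has_real_derivative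
      (dz (dz f) z t * \<phi> z t - dz f z t * dz \<phi> z t) / (\<phi> z t * \<phi> z t)) (at z)"
    unfolding ds_def using assms by (intro DERIV_divide) auto
  then show ?thesis
    by (simp add: ds_def[of \<phi> "ds \<phi> f"] dz_def[of "ds \<phi> f"] DERIV_imp_deriv power3_eq_cube)
qed

section \<open>Spatial maxima and first touching times\<close>

lemma periodic_max_imp_local_max:
  fixes g :: "real \<Rightarrow> real"
  assumes per: "\<And>z. g (z + 2*pi) = g z"
    and z0: "z0 \<in> {0..2*pi}" and max: "\<And>z. z \<in> {0..2*pi} \<Longrightarrow> g z \<le> g z0"
  shows "\<forall>y. \<bar>z0 - y\<bar> < 2*pi \<longrightarrow> g y \<le> g z0"
proof (intro allI impI)
  fix y assume y: "\<bar>z0 - y\<bar> < 2*pi"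
  consider "y < 0" | "y \<in> {0..2*pi}" | "2*pi < y" by force
  then show "g y \<le> g z0"
  proof cases
    case 1
    then have "y + 2*pi \<in> {0..2*pi}" using y z0 by auto
    then show ?thesis using max per by metis
  next
    case 2
    then show ?thesis using max by blast
  next
    case 3
    then have "y - 2*pi \<in> {0..2*pi}" using y z0 by auto
    then show ?thesis using max per[of "y - 2*pi"] by simp
  qed
qed

lemma DERIV2_local_max_nonpos:
  fixes g g' :: "real \<Rightarrow> real"
  assumes "0 < d" and max: "\<forall>y. \<bar>x - y\<bar> < d \<longrightarrow> g y \<le> g x"
    and g': "\<And>y. (g has_real_derivative g' y) (at y)"
    and g'': "(g' has_real_derivative l) (at x)"
  shows "l \<le> 0"
proof (rule ccontr)
  assume "\<not> l \<le> 0"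
  then obtain e where "0 < e" and e: "\<And>h. 0 < h \<Longrightarrow> h < e \<Longrightarrow> g' x < g' (x + h)"
    using DERIV_pos_inc_right[OF g''] by auto
  have "g' x = 0"
    using DERIV_local_max[OF g' \<open>0 < d\<close> max] .
  define h where "h = min (e/2) (d/2)"
  have h: "0 < h" "h < e" "h < d"
    using \<open>0 < e\<close> \<open>0 < d\<close> by (auto simp: h_def)
  obtain \<xi> where "x < \<xi>" "\<xi> < x + h" and mvt: "g (x + h) - g x = h * g' \<xi>"
    using MVT2[of x "x + h" g g'] h g' by auto
  then have "0 < g' \<xi>"
    using e[of "\<xi> - x"] h \<open>g' x = 0\<close> by auto
  then have "g x < g (x + h)"
    using mvt h by (simp add: algebra_simps)
  moreover have "g (x + h) \<le> g x"
    using max h by auto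
  ultimately show False by simp
qed

lemma smooth_zt_ds_at_max:
  assumes \<phi>: "smooth_zt T \<phi>" and f: "smooth_zt T f" and g: "smooth_zt T g"
    and t: "t \<in> {0..<T}" and z0: "z0 \<in> {0..2*pi}" and "0 < \<phi> z0 t"
    and per: "\<And>z. f (z + 2*pi) t = f z t" "\<And>z. g (z + 2*pi) t = g z t"
    and max: "\<And>z. z \<in> {0..2*pi} \<Longrightarrow> f z t - k * g z t \<le> f z0 t - k * g z0 t"
  shows "ds \<phi> f z0 t = k * ds \<phi> g z0 t" and "ds \<phi> (ds \<phi> f) z0 t \<le> k * ds \<phi> (ds \<phi> g) z0 t"
proof -
  let ?h = "\<lambda>z. f z t - k * g z t"
  note f' = smooth_zt_has_derivative_z[OF f t] and g' = smooth_zt_has_derivative_z[OF g t]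
  have local_max: "\<forall>y. \<bar>z0 - y\<bar> < 2*pi \<longrightarrow> ?h y \<le> ?h z0"
    by (rule periodic_max_imp_local_max[where g = ?h, OF _ z0 max]) (simp add: per)
  have h': "(?h has_real_derivative dz f y t - k * dz g y t) (at y)" for y
    using f'(1) g'(1) by (intro DERIV_diff DERIV_cmult)
  have h'': "((\<lambda>y. dz f y t - k * dz g y t) has_real_derivative
      dz (dz f) z0 t - k * dz (dz g) z0 t) (at z0)"
    using f'(2) g'(2) by (intro DERIV_diff DERIV_cmult)
  have slope: "dz f z0 t = k * dz g z0 t"
    using DERIV_local_max[OF h' _ local_max] by simp
  have curvature: "dz (dz f) z0 t \<le> k * dz (dz g) z0 t"
    using DERIV2_local_max_nonpos[OF _ local_max h' h''] by simp
  show "ds \<phi> f z0 t = k * ds \<phi> g z0 t"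
    by (simp add: ds_def slope)
  have "\<phi> z0 t \<noteq> 0"
    using \<open>0 < \<phi> z0 t\<close> by simp
  note \<phi>' = smooth_zt_has_derivative_z(1)[OF \<phi> t, of z0]
  have "ds \<phi> (ds \<phi> f) z0 t - k * ds \<phi> (ds \<phi> g) z0 t
      = (dz (dz f) z0 t - k * dz (dz g) z0 t) / \<phi> z0 t ^ 2"
    unfolding ds_ds_eq[OF f'(2) \<phi>' \<open>\<phi> z0 t \<noteq> 0\<close>] ds_ds_eq[OF g'(2) \<phi>' \<open>\<phi> z0 t \<noteq> 0\<close>] slope
    using \<open>\<phi> z0 t \<noteq> 0\<close> by (simp add: power2_eq_square power3_eq_cube field_simps)
  also have "\<dots> \<le> 0"
    by (rule divide_nonpos_nonneg) (use curvature in auto)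
  finally show "ds \<phi> (ds \<phi> f) z0 t \<le> k * ds \<phi> (ds \<phi> g) z0 t"
    by simp
qed

lemma DERIV_nonneg_left_max:
  fixes g :: "real \<Rightarrow> real"
  assumes g: "(g has_real_derivative l) (at x)" and "0 < d"
    and max: "\<And>y. x - d < y \<Longrightarrow> y < x \<Longrightarrow> g y \<le> g x"
  shows "0 \<le> l"
proof (rule ccontr)
  assume "\<not> 0 \<le> l"
  then obtain e where "0 < e" and e: "\<And>h. 0 < h \<Longrightarrow> h < e \<Longrightarrow> g x < g (x - h)"
    using DERIV_neg_dec_left[OF g] by auto
  define h where "h = min (e/2) (d/2)"
  have "g x < g (x - h)"
    using e \<open>0 < e\<close> \<open>0 < d\<close> by (simp add: h_def)
  moreover have "g (x - h) \<le> g x"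
    using max \<open>0 < e\<close> \<open>0 < d\<close> by (simp add: h_def)
  ultimately show False by simp
qed

lemma least_nonneg_time:
  fixes h :: "real \<Rightarrow> real \<Rightarrow> real"
  assumes cont: "continuous_on ({0..2*pi} \<times> {0..t1}) (\<lambda>x. h (fst x) (snd x))"
    and z1: "z1 \<in> {0..2*pi}" and "0 \<le> t1" and "0 \<le> h z1 t1"
  obtains t0 z where "0 \<le> t0" "t0 \<le> t1" "z \<in> {0..2*pi}" "0 \<le> h z t0"
    "\<And>t z. t \<in> {0..<t0} \<Longrightarrow> z \<in> {0..2*pi} \<Longrightarrow> h z t < 0"
proof -
  define B where "B = {0..2*pi} \<times> {0..t1}"
  define K where "K = B \<inter> (\<lambda>x. h (fst x) (snd x)) -` {0..}"
  have "closed K"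
    unfolding K_def using cont[folded B_def]
    by (rule continuous_closed_preimage) (auto simp: B_def closed_Times)
  moreover have "compact B"
    by (simp add: B_def compact_Times)
  moreover have "K = B \<inter> K"
    by (auto simp: K_def)
  ultimately have "compact K"
    by (metis compact_Int_closed)
  then have "compact (snd ` K)"
    by (intro compact_continuous_image continuous_intros)
  moreover have "(z1, t1) \<in> K"
    using z1 \<open>0 \<le> t1\<close> \<open>0 \<le> h z1 t1\<close> by (auto simp: K_def B_def)
  ultimately obtain t0 where "t0 \<in> snd ` K" and least: "\<And>t. t \<in> snd ` K \<Longrightarrow> t0 \<le> t"
    using compact_attains_inf[of "snd ` K"] by blast
  then obtain z where "(z, t0) \<in> K"
    by force
  moreover have "h y t < 0" if "t \<in> {0..<t0}" "y \<in> {0..2*pi}" for t y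
  proof (rule ccontr)
    assume "\<not> h y t < 0"
    then have "t \<in> snd ` K"
      using that \<open>(z, t0) \<in> K\<close> by (force simp: K_def B_def)
    then show False
      using least that by force
  qed
  ultimately show ?thesis
    using that by (auto simp: K_def B_def)
qed

lemma first_touching_time:
  fixes h :: "real \<Rightarrow> real \<Rightarrow> real"
  assumes cont: "continuous_on (UNIV \<times> {0..<T}) (\<lambda>x. h (fst x) (snd x))"
    and init: "\<And>z. z \<in> {0..2*pi} \<Longrightarrow> h z 0 < 0"
    and z1: "z1 \<in> {0..2*pi}" and t1: "t1 \<in> {0..<T}" and "0 \<le> h z1 t1"
  obtains t0 z0 where "0 < t0" "t0 < T" "z0 \<in> {0..2*pi}" "0 \<le> h z0 t0"
    "\<And>z. z \<in> {0..2*pi} \<Longrightarrow> h z t0 \<le> h z0 t0" "\<And>t. t \<in> {0..<t0} \<Longrightarrow> h z0 t < 0"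
proof -
  have "continuous_on ({0..2*pi} \<times> {0..t1}) (\<lambda>x. h (fst x) (snd x))"
    by (rule continuous_on_subset[OF cont]) (use t1 in auto)
  then obtain t0 z where "0 \<le> t0" "t0 \<le> t1" "z \<in> {0..2*pi}" "0 \<le> h z t0"
    and before: "\<And>t z. t \<in> {0..<t0} \<Longrightarrow> z \<in> {0..2*pi} \<Longrightarrow> h z t < 0"
    using least_nonneg_time[where h = h, OF _ z1 _ \<open>0 \<le> h z1 t1\<close>] t1 by auto
  moreover have "t0 \<noteq> 0"
    using init \<open>z \<in> {0..2*pi}\<close> \<open>0 \<le> h z t0\<close> by force
  moreover have "continuous_on {0..2*pi} (\<lambda>z. h z t0)"
    by (rule continuous_on_slice[OF cont]) (use \<open>0 \<le> t0\<close> \<open>t0 \<le> t1\<close> t1 in auto)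
  then obtain z0 where z0: "z0 \<in> {0..2*pi}" and max: "\<And>z. z \<in> {0..2*pi} \<Longrightarrow> h z t0 \<le> h z0 t0"
    using continuous_attains_sup[of "{0..2*pi}" "\<lambda>z. h z t0"] by auto
  ultimately show ?thesis
    using that[of t0 z0] max[of z] before[OF _ z0] t1 by fastforce
qed

lemma perturbed_max_principle:
  fixes u :: "real \<Rightarrow> real \<Rightarrow> real"
  assumes cont: "continuous_on (UNIV \<times> {0..<T}) (\<lambda>x. u (fst x) (snd x))"
    and init: "\<And>z. z \<in> {0..2*pi} \<Longrightarrow> u z 0 \<le> 0"
    and no_touch: "\<And>\<epsilon> t0 z0. 0 < \<epsilon> \<Longrightarrow> t0 \<in> {0<..<T} \<Longrightarrow> z0 \<in> {0..2*pi} \<Longrightarrow>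
        (\<And>z. z \<in> {0..2*pi} \<Longrightarrow> u z t0 \<le> u z0 t0) \<Longrightarrow> \<epsilon> * (1 + t0) \<le> u z0 t0 \<Longrightarrow>
        (\<And>t. t \<in> {0..<t0} \<Longrightarrow> u z0 t < \<epsilon> * (1 + t)) \<Longrightarrow> False"
    and t: "t \<in> {0..<T}" and z: "z \<in> {0..2*pi}"
  shows "u z t \<le> 0"
proof (rule field_le_epsilon)
  fix e :: real
  assume "0 < e"
  define \<epsilon> where "\<epsilon> = e / (1 + t)"
  have "0 < \<epsilon>" and e: "e = \<epsilon> * (1 + t)"
    using \<open>0 < e\<close> t by (auto simp: \<epsilon>_def)
  have "u z t < \<epsilon> * (1 + t)"
  proof (rule ccontr)
    let ?h = "\<lambda>z t. u z t - \<epsilon> * (1 + t)"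
    assume "\<not> u z t < \<epsilon> * (1 + t)"
    then have "0 \<le> ?h z t"
      by simp
    moreover have "continuous_on (UNIV \<times> {0..<T}) (\<lambda>x. ?h (fst x) (snd x))"
      by (intro continuous_intros cont)
    moreover have "?h z 0 < 0" if "z \<in> {0..2*pi}" for z
      using init[OF that] \<open>0 < \<epsilon>\<close> by simp
    ultimately obtain t0 z0 where "0 < t0" "t0 < T" "z0 \<in> {0..2*pi}" "0 \<le> ?h z0 t0"
      "\<And>z. z \<in> {0..2*pi} \<Longrightarrow> ?h z t0 \<le> ?h z0 t0" "\<And>t. t \<in> {0..<t0} \<Longrightarrow> ?h z0 t < 0"
      using first_touching_time[of T ?h z t] z t by blast
    then show False
      by (intro no_touch[OF \<open>0 < \<epsilon>\<close>, of t0 z0]) auto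
  qed
  then show "u z t \<le> 0 + e"
    using e by simp
qed

section \<open>The flow at a spatial maximum\<close>

lemma ratio_reaction_nonpos:
  fixes p q c Dp Dq Dc DDp DDc :: real
  assumes "0 < p" "0 < q" "0 < c" "c \<le> p" "q \<le> p"
    and slope: "Dp * c = p * Dc" and curvature: "DDp * c \<le> p * DDc"
  shows "(DDp + Dp * (Dq / q + Dc / c) - 2 * (p^4 - (q^2 - c^2)^2) / (p * q^2 * c^2)) * c
      - p * (DDc + Dc * (Dq / q + Dp / p) - 2 * (c^4 - (q^2 - p^2)^2) / (c * q^2 * p^2)) \<le> 0"
proof -
  have Dp: "Dp = p * Dc / c"
    using slope \<open>0 < c\<close> by (simp add: field_simps)
  have gradient: "Dp * (Dq / q + Dc / c) * c = p * (Dc * (Dq / q + Dp / p))"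
    unfolding Dp using \<open>0 < p\<close> \<open>0 < c\<close> by (simp add: field_simps)
  have quotient: "2 * A / (p * q^2 * c^2) * c - p * (2 * B / (c * q^2 * p^2))
      = 2 * (A - B) / (p * q^2 * c)" for A B
    using assms(1-3) by (simp add: power2_eq_square field_simps)
  have reaction: "2 * (p^4 - (q^2 - c^2)^2) / (p * q^2 * c^2) * c
      - p * (2 * (c^4 - (q^2 - p^2)^2) / (c * q^2 * p^2))
      = 4 * (p^2 - c^2) * (p^2 + c^2 - q^2) / (p * q^2 * c)"
    unfolding quotient by (simp add: power2_eq_square power4_eq_xxxx algebra_simps)
  have "c^2 \<le> p^2" "q^2 \<le> p^2"
    using assms(2-5) by (simp_all add: power_mono)
  then have "0 \<le> p^2 - c^2" "0 \<le> p^2 + c^2 - q^2"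
    using zero_le_power2[of c] by linarith+
  then have "0 \<le> 4 * (p^2 - c^2) * (p^2 + c^2 - q^2) / (p * q^2 * c)"
    using assms(1-3) by (intro divide_nonneg_pos mult_nonneg_nonneg) auto
  then show ?thesis
    using curvature gradient reaction by (simp add: algebra_simps)
qed

lemma reaction_lower_bound:
  fixes a b c :: real
  assumes "0 < a" "0 < b" "a \<le> c" "b \<le> c"
  shows "a^2 * b^2 \<le> c^4 - (a^2 - b^2)^2"
proof -
  have "(x - y)^2 + x * y \<le> y^2" if "0 \<le> x" "x \<le> y" for x y :: real
  proof -
    have "x * x \<le> x * y"
      using that by (simp add: mult_left_mono)
    then show ?thesis
      by (simp add: power2_eq_square algebra_simps)
  qed
  then have "(a^2 - b^2)^2 + a^2 * b^2 \<le> (max (a^2) (b^2))^2"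
    by (smt (verit) zero_le_power2 power2_commute mult.commute)
  also have "\<dots> \<le> (c^2)^2"
    using assms by (simp add: max_def power_mono)
  finally show ?thesis
    by simp
qed

definition warping_velocity :: "(real \<Rightarrow> real \<Rightarrow> real) \<Rightarrow> (real \<Rightarrow> real \<Rightarrow> real) \<Rightarrow>
    (real \<Rightarrow> real \<Rightarrow> real) \<Rightarrow> (real \<Rightarrow> real \<Rightarrow> real) \<Rightarrow> real \<Rightarrow> real \<Rightarrow> real" where
  "warping_velocity \<phi> x y w z t = ds \<phi> (ds \<phi> x) z t
     + ds \<phi> x z t * (ds \<phi> y z t / y z t + ds \<phi> w z t / w z t)
     - 2 * ((x z t)^4 - ((y z t)^2 - (w z t)^2)^2) / (x z t * (y z t)^2 * (w z t)^2)"

lemma bianchi_rf_smooth: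
  assumes "bianchi_rf T \<phi> a b c"
  shows "smooth_zt T \<phi>" "smooth_zt T a" "smooth_zt T b" "smooth_zt T c"
  using assms by (simp_all add: bianchi_rf_def)

lemma bianchi_rf_pos:
  assumes "bianchi_rf T \<phi> a b c" and "t \<in> {0..<T}"
  shows "0 < \<phi> z t" "0 < a z t" "0 < b z t" "0 < c z t"
  using assms unfolding bianchi_rf_def by blast+

lemma bianchi_rf_periodic:
  assumes "bianchi_rf T \<phi> a b c" and "t \<in> {0..<T}"
  shows "a (z + 2*pi) t = a z t" "b (z + 2*pi) t = b z t" "c (z + 2*pi) t = c z t"
  using assms unfolding bianchi_rf_def by blast+

lemma bianchi_rf_evolution:
  assumes "bianchi_rf T \<phi> a b c" and "t \<in> {0<..<T}"
  shows "dt b z t = warping_velocity \<phi> b a c z t" "dt c z t = warping_velocity \<phi> c a b z t"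
  using assms unfolding bianchi_rf_def warping_velocity_def by blast+

lemma bianchi_rf_swap:
  assumes "bianchi_rf T \<phi> a b c"
  shows "bianchi_rf T \<phi> b a c"
  using assms unfolding bianchi_rf_def by (simp add: ac_simps power2_commute)

lemma bianchi_rf_ratio_at_spatial_max:
  assumes flow: "bianchi_rf T \<phi> a b c" and t: "t \<in> {0<..<T}" and z0: "z0 \<in> {0..2*pi}"
    and max: "\<And>z. z \<in> {0..2*pi} \<Longrightarrow> b z t / c z t \<le> b z0 t / c z0 t"
    and "a z0 t \<le> b z0 t" and "c z0 t \<le> b z0 t"
  shows "dt b z0 t * c z0 t - b z0 t * dt c z0 t \<le> 0"
proof -
  have t': "t \<in> {0..<T}"
    using t by simp
  note smooth = bianchi_rf_smooth[OF flow] and pos = bianchi_rf_pos[OF flow t']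
  define k where "k = b z0 t / c z0 t"
  have "b z t - k * c z t \<le> b z0 t - k * c z0 t" if "z \<in> {0..2*pi}" for z
    using max[OF that] pos[of z] pos[of z0] by (simp add: k_def divide_le_eq)
  then have "ds \<phi> b z0 t = k * ds \<phi> c z0 t" "ds \<phi> (ds \<phi> b) z0 t \<le> k * ds \<phi> (ds \<phi> c) z0 t"
    using smooth_zt_ds_at_max[OF smooth(1,3,4) t' z0 pos(1)] bianchi_rf_periodic[OF flow t'] by auto
  then have "ds \<phi> b z0 t * c z0 t = b z0 t * ds \<phi> c z0 t"
      "ds \<phi> (ds \<phi> b) z0 t * c z0 t \<le> b z0 t * ds \<phi> (ds \<phi> c) z0 t"
    using pos(4)[of z0] by (simp_all add: k_def field_simps)
  from ratio_reaction_nonpos[OF pos(3) pos(2) pos(4) \<open>c z0 t \<le> b z0 t\<close> \<open>a z0 t \<le> b z0 t\<close> this]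
  show ?thesis
    by (simp add: bianchi_rf_evolution[OF flow t] warping_velocity_def)
qed

lemma bianchi_rf_c_at_spatial_max:
  assumes flow: "bianchi_rf T \<phi> a b c" and t: "t \<in> {0<..<T}" and z0: "z0 \<in> {0..2*pi}"
    and max: "\<And>z. z \<in> {0..2*pi} \<Longrightarrow> c z t \<le> c z0 t"
    and ac: "a z0 t \<le> c z0 t" and bc: "b z0 t \<le> c z0 t"
  shows "c z0 t * dt c z0 t \<le> -2"
proof -
  have t': "t \<in> {0..<T}"
    using t by simp
  note smooth = bianchi_rf_smooth[OF flow] and pos = bianchi_rf_pos[OF flow t']
  have ds_c: "ds \<phi> c z0 t = 0" and ds_ds_c: "ds \<phi> (ds \<phi> c) z0 t \<le> 0"
    using smooth_zt_ds_at_max[OF smooth(1,4,4) t' z0 pos(1), of 0] max bianchi_rf_periodic[OF flow t']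
    by auto
  have "(a z0 t)^2 * (b z0 t)^2 \<le> (c z0 t)^4 - ((a z0 t)^2 - (b z0 t)^2)^2"
    by (rule reaction_lower_bound) (use pos ac bc in auto)
  then have "2 \<le> c z0 t * (2 * ((c z0 t)^4 - ((a z0 t)^2 - (b z0 t)^2)^2)
      / (c z0 t * (a z0 t)^2 * (b z0 t)^2))"
    using pos[of z0] by (simp add: le_divide_eq)
  moreover have "c z0 t * ds \<phi> (ds \<phi> c) z0 t \<le> 0"
    using pos(4)[of z0] ds_ds_c by (simp add: mult_nonneg_nonpos)
  ultimately show ?thesis
    by (simp add: bianchi_rf_evolution[OF flow t] warping_velocity_def ds_c algebra_simps)
qed

lemma bianchi_rf_ratio_touch_impossible:
  assumes flow: "bianchi_rf T \<phi> a b c" and "0 < \<epsilon>" and t0: "t0 \<in> {0<..<T}"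
    and z0: "z0 \<in> {0..2*pi}" and "a z0 t0 \<le> b z0 t0"
    and max: "\<And>z. z \<in> {0..2*pi} \<Longrightarrow> b z t0 / c z t0 \<le> b z0 t0 / c z0 t0"
    and touch: "1 + \<epsilon> * (1 + t0) \<le> b z0 t0 / c z0 t0"
    and before: "\<And>t. t \<in> {0..<t0} \<Longrightarrow> b z0 t / c z0 t < 1 + \<epsilon> * (1 + t)"
  shows False
proof -
  have "0 < c z0 t0"
    using bianchi_rf_pos[OF flow] t0 by simp
  have "0 < \<epsilon> * (1 + t0)"
    using \<open>0 < \<epsilon>\<close> t0 by simp
  then have "1 < b z0 t0 / c z0 t0"
    using touch by linarith
  then have "c z0 t0 \<le> b z0 t0"
    using \<open>0 < c z0 t0\<close> by (simp add: less_divide_eq)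
  then have decreasing: "dt b z0 t0 * c z0 t0 - b z0 t0 * dt c z0 t0 \<le> 0"
    by (intro bianchi_rf_ratio_at_spatial_max[OF flow t0 z0 max \<open>a z0 t0 \<le> b z0 t0\<close>])
  have "((\<lambda>s. b z0 s / c z0 s - \<epsilon> * (1 + s)) has_real_derivative
      (dt b z0 t0 * c z0 t0 - b z0 t0 * dt c z0 t0) / (c z0 t0 * c z0 t0) - \<epsilon>) (at t0)"
    using smooth_zt_has_derivative_t[OF bianchi_rf_smooth(3)[OF flow] t0]
      smooth_zt_has_derivative_t[OF bianchi_rf_smooth(4)[OF flow] t0] \<open>0 < c z0 t0\<close>
    by (auto intro!: derivative_eq_intros)
  moreover have "b z0 s / c z0 s - \<epsilon> * (1 + s) \<le> b z0 t0 / c z0 t0 - \<epsilon> * (1 + t0)"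
    if "0 < s" "s < t0" for s
    using before[of s] touch that by simp
  ultimately have "0 \<le> (dt b z0 t0 * c z0 t0 - b z0 t0 * dt c z0 t0) / (c z0 t0 * c z0 t0) - \<epsilon>"
    using t0 by (intro DERIV_nonneg_left_max[where d = t0]) auto
  moreover have "(dt b z0 t0 * c z0 t0 - b z0 t0 * dt c z0 t0) / (c z0 t0 * c z0 t0) \<le> 0"
    by (rule divide_nonpos_nonneg) (use decreasing in auto)
  ultimately show False
    using \<open>0 < \<epsilon>\<close> by linarith
qed

lemma bianchi_rf_c_largest:
  assumes flow: "bianchi_rf T \<phi> a b c"
    and init: "\<And>z. z \<in> {0..2*pi} \<Longrightarrow> a z 0 \<le> c z 0 \<and> b z 0 \<le> c z 0"
    and t: "t \<in> {0..<T}" and z: "z \<in> {0..2*pi}"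
  shows "a z t \<le> c z t \<and> b z t \<le> c z t"
proof -
  let ?u = "\<lambda>z t. max (a z t / c z t) (b z t / c z t) - 1"
  note pos = bianchi_rf_pos[OF flow] and smooth = bianchi_rf_smooth[OF flow]
  have "?u z t \<le> 0"
  proof (rule perturbed_max_principle[OF _ _ _ t z])
    show "continuous_on (UNIV \<times> {0..<T}) (\<lambda>x. ?u (fst x) (snd x))"
      using smooth_zt_continuous[OF smooth(2)] smooth_zt_continuous[OF smooth(3)]
        smooth_zt_continuous[OF smooth(4)] pos(4)
      by (intro continuous_intros) (auto simp: less_imp_neq[symmetric])
    show "?u z 0 \<le> 0" if "z \<in> {0..2*pi}" for z
      using init[OF that] pos(4)[of 0 z] t by simp
  next
    fix \<epsilon> t0 z0
    assume "0 < \<epsilon>" and t0: "t0 \<in> {0<..<T}" and z0: "z0 \<in> {0..2*pi}"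
      and max: "\<And>z. z \<in> {0..2*pi} \<Longrightarrow> ?u z t0 \<le> ?u z0 t0" and touch: "\<epsilon> * (1 + t0) \<le> ?u z0 t0"
      and before: "\<And>t. t \<in> {0..<t0} \<Longrightarrow> ?u z0 t < \<epsilon> * (1 + t)"
    have no_touch: False if flow': "bianchi_rf T \<phi> q p c" and "q z0 t0 \<le> p z0 t0"
      and u: "\<And>z t. max (a z t / c z t) (b z t / c z t) = max (q z t / c z t) (p z t / c z t)" for p q
    proof (rule bianchi_rf_ratio_touch_impossible[OF flow' \<open>0 < \<epsilon>\<close> t0 z0 \<open>q z0 t0 \<le> p z0 t0\<close>])
      have "0 < c z0 t0"
        using pos(4) t0 by simp
      then have p_max: "max (q z0 t0 / c z0 t0) (p z0 t0 / c z0 t0) = p z0 t0 / c z0 t0"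
        using \<open>q z0 t0 \<le> p z0 t0\<close> by (simp add: divide_right_mono)
      show "p z t0 / c z t0 \<le> p z0 t0 / c z0 t0" if "z \<in> {0..2*pi}" for z
        using max[OF that] unfolding u p_max by simp
      show "1 + \<epsilon> * (1 + t0) \<le> p z0 t0 / c z0 t0"
        using touch unfolding u p_max by simp
      show "p z0 t / c z0 t < 1 + \<epsilon> * (1 + t)" if "t \<in> {0..<t0}" for t
        using before[OF that] by (simp add: u)
    qed
    consider "a z0 t0 \<le> b z0 t0" | "b z0 t0 \<le> a z0 t0"
      by linarith
    then show False
    proof cases
      case 1
      then show False
        by (rule no_touch[OF flow]) simp
    next
      case 2
      then show False
        by (rule no_touch[OF bianchi_rf_swap[OF flow]]) (simp add: max.commute)
    qed
  qed
  then show ?thesis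
    using pos(4)[OF t, of z] by (simp add: divide_le_eq_1)
qed

lemma bianchi_rf_c_sq_decay:
  assumes flow: "bianchi_rf T \<phi> a b c"
    and largest: "\<And>t z. t \<in> {0..<T} \<Longrightarrow> z \<in> {0..2*pi} \<Longrightarrow> a z t \<le> c z t \<and> b z t \<le> c z t"
    and init: "\<And>z. z \<in> {0..2*pi} \<Longrightarrow> (c z 0)^2 \<le> K"
    and t: "t \<in> {0..<T}" and z: "z \<in> {0..2*pi}"
  shows "(c z t)^2 \<le> K - 4 * t"
proof -
  let ?u = "\<lambda>z t. (c z t)^2 - (K - 4 * t)"
  note pos = bianchi_rf_pos[OF flow]
  have "?u z t \<le> 0"
  proof (rule perturbed_max_principle[OF _ _ _ t z])
    show "continuous_on (UNIV \<times> {0..<T}) (\<lambda>x. ?u (fst x) (snd x))"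
      using smooth_zt_continuous[OF bianchi_rf_smooth(4)[OF flow]] by (intro continuous_intros)
    show "?u z 0 \<le> 0" if "z \<in> {0..2*pi}" for z
      using init[OF that] by simp
  next
    fix \<epsilon> t0 z0
    assume "0 < \<epsilon>" and t0: "t0 \<in> {0<..<T}" and z0: "z0 \<in> {0..2*pi}"
      and max: "\<And>z. z \<in> {0..2*pi} \<Longrightarrow> ?u z t0 \<le> ?u z0 t0" and touch: "\<epsilon> * (1 + t0) \<le> ?u z0 t0"
      and before: "\<And>t. t \<in> {0..<t0} \<Longrightarrow> ?u z0 t < \<epsilon> * (1 + t)"
    have t0': "t0 \<in> {0..<T}"
      using t0 by simp
    have "c z t0 \<le> c z0 t0" if "z \<in> {0..2*pi}" for z
    proof (rule power2_le_imp_le)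
      show "(c z t0)^2 \<le> (c z0 t0)^2"
        using max[OF that] by simp
      show "0 \<le> c z0 t0"
        using pos(4)[OF t0', of z0] by simp
    qed
    then have speed: "c z0 t0 * dt c z0 t0 \<le> -2"
      using bianchi_rf_c_at_spatial_max[OF flow t0 z0] largest[OF t0' z0] by blast
    have "((\<lambda>s. ?u z0 s - \<epsilon> * (1 + s)) has_real_derivative
        2 * c z0 t0 * dt c z0 t0 + 4 - \<epsilon>) (at t0)"
      using smooth_zt_has_derivative_t[OF bianchi_rf_smooth(4)[OF flow] t0]
      by (auto intro!: derivative_eq_intros)
    moreover have "?u z0 s - \<epsilon> * (1 + s) \<le> ?u z0 t0 - \<epsilon> * (1 + t0)" if "0 < s" "s < t0" for s
      using before[of s] touch that by simp
    ultimately have "0 \<le> 2 * c z0 t0 * dt c z0 t0 + 4 - \<epsilon>"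
      using t0 by (intro DERIV_nonneg_left_max[where d = t0]) auto
    then show False
      using speed \<open>0 < \<epsilon>\<close> by linarith
  qed
  then show ?thesis
    by simp
qed

lemma chat_attains_max:
  assumes "continuous_on {0..2*pi} (\<lambda>z. c z t)"
  obtains zm where "zm \<in> {0..2*pi}" "chat c t = c zm t" "\<And>z. z \<in> {0..2*pi} \<Longrightarrow> c z t \<le> chat c t"
proof -
  obtain zm where zm: "zm \<in> {0..2*pi}" and max: "\<And>z. z \<in> {0..2*pi} \<Longrightarrow> c z t \<le> c zm t"
    using continuous_attains_sup[OF compact_Icc _ assms] by auto
  then have "chat c t = c zm t"
    unfolding chat_def by (intro cSup_eq_maximum) auto
  then show ?thesis
    using that zm max by simp
qed

theorem lemma4p3:
  fixes T :: real and \<phi> a b c :: "real \<Rightarrow> real \<Rightarrow> real"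
  assumes "bianchi_rf T \<phi> a b c"
    and "\<forall>z. a z 0 \<le> b z 0 \<and> b z 0 \<le> c z 0"
  shows "\<forall>t\<in>{0..<T}. (chat c t)^2 \<le> -4*t + (chat c 0)^2"
proof
  fix t
  assume t: "t \<in> {0..<T}"
  then have "0 \<in> {0..<T}"
    by simp
  have slice: "continuous_on {0..2*pi} (\<lambda>z. c z s)" if "s \<in> {0..<T}" for s
    using continuous_on_slice[OF smooth_zt_continuous[OF bianchi_rf_smooth(4)[OF assms(1)]] that] .
  have largest: "a z s \<le> c z s \<and> b z s \<le> c z s" if "s \<in> {0..<T}" "z \<in> {0..2*pi}" for s z
    by (rule bianchi_rf_c_largest[OF assms(1) _ that]) (use assms(2) order_trans in blast)
  have init: "(c z 0)^2 \<le> (chat c 0)^2" if "z \<in> {0..2*pi}" for z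
    using chat_attains_max[of c 0, OF slice[OF \<open>0 \<in> {0..<T}\<close>]] bianchi_rf_pos(4)[OF assms(1) \<open>0 \<in> {0..<T}\<close>] that
    by (metis less_imp_le power_mono)
  obtain zm where "zm \<in> {0..2*pi}" "chat c t = c zm t"
    using chat_attains_max[of c t, OF slice[OF t]] by blast
  then show "(chat c t)^2 \<le> -4*t + (chat c 0)^2"
    using bianchi_rf_c_sq_decay[OF assms(1) largest init t] by simp
qed

end
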